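(* For every integer $k\ge2$, with $d=k(k-1)/2$, there exist linear operators $A_1,\ldots,A_k\colon\mathbb{R}^k\to\mathbb{R}^d$ such that for every $x\in\mathbb{R}^k$ the vectors $A_1x,\ldots,A_kx$ are linearly dependent, while for every nonzero $x=(x_1,\ldots,x_k)\in\mathbb{R}^k$ the operator $\sum_{i=1}^kx_iA_i$ has rank exactly $k-1$. In particular, no nontrivial linear combination of $A_1,\ldots,A_k$ has rank less than $k-1$. *)

theory Defs
  imports "HOL-Analysis.Analysis"
begin

end

theory Submission
  imports Defs
begin

(* The operators are the coordinates of the exterior product.  Index the d = k(k-1)/2 rows
   by a map p that hits every unordered pair {a,b} of distinct coordinates, and let A_i send
   x to the vector whose row r = (a,b) is [i = a] x_b - [i = b] x_a.  Then

     (sum_i c_i A_i x)_(a,b) = c_a x_b - c_b x_a,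

   the 2x2 minors of the pair (c, x).  Taking c = x makes all minors vanish, so the A_i x are
   linearly dependent.  For x \<noteq> 0 the pencil M_x = sum_i x_i A_i maps y to the minors of
   (x, y), which vanish exactly when y is a multiple of x; so the kernel of M_x is the line
   spanned by x, and rank-nullity gives rank M_x = k - 1.
   The file proves rank-nullity for matrices, the minor formula, the kernel computation and
   the existence of a row labelling p from the size of the row index type; the theorem
   combines them. *)

text \<open>Rank-nullity for real matrices: the row space and the null space are orthogonal
  complements of each other.\<close>

lemma rank_plus_nullity:
  fixes M :: "real^'k^'d"
  shows "rank M + dim {y. M *v y = 0} = CARD('k)"
proof -
  have null_space: "{y \<in> UNIV. \<forall>r \<in> span (rows M). orthogonal r y} = {y. M *v y = 0}"
  proof (intro set_eqI iffI)
    fix y assume "y \<in> {y \<in> UNIV. \<forall>r \<in> span (rows M). orthogonal r y}"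
    then have "\<forall>i. orthogonal (row i M) y" by (auto simp: rows_def intro: span_base)
    then show "y \<in> {y. M *v y = 0}"
      by (simp add: vec_eq_iff matrix_vector_mul_component orthogonal_def row_def vec_lambda_eta)
  next
    fix y assume "y \<in> {y. M *v y = 0}"
    then show "y \<in> {y \<in> UNIV. \<forall>r \<in> span (rows M). orthogonal r y}"
      using orthogonal_nullspace_rowspace orthogonal_commute by blast
  qed
  have "dim {y \<in> UNIV. \<forall>r \<in> span (rows M). orthogonal r y} + dim (span (rows M))
          = dim (UNIV :: (real^'k) set)"
    by (rule dim_subspace_orthogonal_to_vectors) auto
  then show ?thesis using null_space by (simp add: row_rank_def)
qed

lemma matrix_combination_apply:
  fixes A :: "'i \<Rightarrow> real^'k^'d" and c :: "'i \<Rightarrow> real"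
  shows "(\<Sum>i\<in>I. c i *\<^sub>R A i) *v y = (\<Sum>i\<in>I. c i *\<^sub>R (A i *v y))"
  by (simp add: vec_eq_iff matrix_vector_mult_def sum_component sum_distrib_left
                sum_distrib_right mult.assoc)
     (subst sum.swap, simp add: mult_ac)

lemma minors_vanish_imp_parallel:
  fixes x y :: "real^'k"
  assumes "x $ j \<noteq> 0" and "\<And>a b. x $ a * y $ b = x $ b * y $ a"
  shows "y \<in> span {x}"
proof -
  have "y = (y $ j / x $ j) *\<^sub>R x"
    using assms by (simp add: vec_eq_iff field_simps)
  then show ?thesis by (metis span_base span_scale singletonI)
qed

definition minor_operator :: "('d \<Rightarrow> 'k \<times> 'k) \<Rightarrow> 'k \<Rightarrow> real^'k^'d" where
  "minor_operator p i = (\<chi> r j. (if i = fst (p r) \<and> j = snd (p r) then 1 else 0)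
                              - (if i = snd (p r) \<and> j = fst (p r) then 1 else 0))"

lemma minor_operator_apply:
  "(minor_operator p i *v y) $ r
     = (if i = fst (p r) then y $ snd (p r) else 0) - (if i = snd (p r) then y $ fst (p r) else 0)"
  by (cases "i = fst (p r)"; cases "i = snd (p r)")
     (simp_all add: minor_operator_def matrix_vector_mult_def left_diff_distrib sum_subtractf
        if_distrib[of "\<lambda>u. u * z" for z] sum.delta' cong: if_cong)

lemma minor_operator_combination:
  "(\<Sum>i\<in>UNIV. c i *\<^sub>R (minor_operator p i *v y))
     = (\<chi> r. c (fst (p r)) * y $ snd (p r) - c (snd (p r)) * y $ fst (p r))"
  by (simp add: vec_eq_iff sum_component minor_operator_apply right_diff_distrib sum_subtractf
        if_distrib[of "\<lambda>u. z * u" for z] sum.delta' del: if_image_distrib cong: if_cong)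

text \<open>Antisymmetry of the minors: the coordinates of x are a nontrivial dependence
  among the images of x (the case x = 0 being trivial).\<close>

lemma minor_operator_images_dependent:
  fixes x :: "real^'k"
  shows "\<exists>c :: 'k \<Rightarrow> real. (\<exists>i. c i \<noteq> 0) \<and> (\<Sum>i\<in>UNIV. c i *\<^sub>R (minor_operator p i *v x)) = 0"
proof (cases "x = 0")
  case True
  then show ?thesis by (intro exI[of _ "\<lambda>_. 1"]) simp
next
  case False
  then obtain j where "x $ j \<noteq> 0" by (metis vec_eq_iff zero_index)
  then show ?thesis
    by (intro exI[of _ "\<lambda>i. x $ i"]) (auto simp: vec_eq_iff minor_operator_combination)
qed

lemma minor_pencil_kernel:
  fixes p :: "'d::finite \<Rightarrow> 'k::finite \<times> 'k" and x :: "real^'k"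
  assumes covers: "\<And>a b. a \<noteq> b \<Longrightarrow> \<exists>r. p r = (a, b) \<or> p r = (b, a)"
    and "x \<noteq> 0"
  shows "{y. (\<Sum>i\<in>UNIV. x $ i *\<^sub>R minor_operator p i) *v y = 0} = span {x}"
proof (intro set_eqI iffI)
  fix y assume "y \<in> {y. (\<Sum>i\<in>UNIV. x $ i *\<^sub>R minor_operator p i) *v y = 0}"
  then have row_minor: "x $ fst (p r) * y $ snd (p r) = x $ snd (p r) * y $ fst (p r)" for r
    by (simp add: matrix_combination_apply vec_eq_iff minor_operator_combination)
  have "x $ a * y $ b = x $ b * y $ a" for a b
  proof (cases "a = b")
    case False
    then obtain r where "p r = (a, b) \<or> p r = (b, a)" using covers by blast
    then show ?thesis using row_minor[of r] by auto
  qed simp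
  moreover obtain j where "x $ j \<noteq> 0" using \<open>x \<noteq> 0\<close> by (metis vec_eq_iff zero_index)
  ultimately show "y \<in> span {x}" by (intro minors_vanish_imp_parallel)
next
  fix y assume "y \<in> span {x}"
  then obtain t where "y = t *\<^sub>R x" by (auto simp: span_singleton)
  then show "y \<in> {y. (\<Sum>i\<in>UNIV. x $ i *\<^sub>R minor_operator p i) *v y = 0}"
    by (simp add: matrix_combination_apply vec_eq_iff minor_operator_combination)
qed

lemma minor_pencil_rank:
  fixes p :: "'d::finite \<Rightarrow> 'k::finite \<times> 'k" and x :: "real^'k"
  assumes "\<And>a b. a \<noteq> b \<Longrightarrow> \<exists>r. p r = (a, b) \<or> p r = (b, a)"
    and "x \<noteq> 0"
  shows "rank (\<Sum>i\<in>UNIV. x $ i *\<^sub>R minor_operator p i) = CARD('k) - 1"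
  using rank_plus_nullity[of "\<Sum>i\<in>UNIV. x $ i *\<^sub>R minor_operator p i"]
    minor_pencil_kernel[OF assms] \<open>x \<noteq> 0\<close> by simp

text \<open>A row index set of size k choose 2 suffices to label every unordered pair of
  distinct coordinates: biject it with the two-element subsets and pick an ordering of
  each subset.\<close>

lemma pair_labelling_exists:
  assumes "CARD('d::finite) = CARD('k::finite) * (CARD('k) - 1) div 2"
  shows "\<exists>p :: 'd \<Rightarrow> 'k \<times> 'k. \<forall>a b. a \<noteq> b \<longrightarrow> (\<exists>r. p r = (a, b) \<or> p r = (b, a))"
proof -
  let ?pairs = "{S :: 'k set. S \<subseteq> UNIV \<and> card S = 2}"
  have "card ?pairs = CARD('k) choose 2" by (rule n_subsets) simp
  then have "CARD('d) = card ?pairs" using assms by (simp add: choose_two)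
  then obtain q :: "'d \<Rightarrow> 'k set" where q: "bij_betw q UNIV ?pairs"
    using finite_same_card_bij[of "UNIV :: 'd set" ?pairs] by auto
  define p :: "'d \<Rightarrow> 'k \<times> 'k" where "p r = (SOME (a, b). q r = {a, b})" for r
  have p_spec: "q r = {fst (p r), snd (p r)}" for r
  proof -
    have "card (q r) = 2" using bij_betwE[OF q] by blast
    then obtain a b where "q r = {a, b}" by (meson card_2_iff)
    then have "\<exists>ab. case ab of (a, b) \<Rightarrow> q r = {a, b}" by auto
    from someI_ex[OF this] show ?thesis by (simp add: p_def split: prod.splits)
  qed
  have "\<exists>r. p r = (a, b) \<or> p r = (b, a)" if "a \<noteq> b" for a b
  proof -
    have "{a, b} \<in> ?pairs" using that by simp
    then obtain r where "q r = {a, b}" using bij_betw_imp_surj_on[OF q] by (metis imageE)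
    then have "{fst (p r), snd (p r)} = {a, b}" using p_spec by simp
    then show ?thesis by (metis doubleton_eq_iff prod.collapse)
  qed
  then show ?thesis by blast
qed

theorem mainTheorem8:
  assumes "CARD('k::finite) \<ge> 2"
    and "CARD('d::finite) = CARD('k) * (CARD('k) - 1) div 2"
  shows "\<exists>A :: 'k \<Rightarrow> real^'k^'d.
           (\<forall>x :: real^'k. \<exists>c :: 'k \<Rightarrow> real.
              (\<exists>i. c i \<noteq> 0) \<and> (\<Sum>i\<in>UNIV. c i *\<^sub>R (A i *v x)) = 0)
         \<and> (\<forall>x :: real^'k. x \<noteq> 0 \<longrightarrow>
              rank (\<Sum>i\<in>UNIV. (x $ i) *\<^sub>R A i) = CARD('k) - 1)"
proof -
  obtain p :: "'d \<Rightarrow> 'k \<times> 'k" where covers: "\<And>a b. a \<noteq> b \<Longrightarrow> \<exists>r. p r = (a, b) \<or> p r = (b, a)"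
    using pair_labelling_exists[OF assms(2)] by blast
  show ?thesis
    by (intro exI[of _ "minor_operator p"] conjI allI impI minor_operator_images_dependent
          minor_pencil_rank[OF covers])
qed

end
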